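(* In $\mathbb{R}^8$ with coordinates $(l_{ijk})_{i,j,k\in\{0,1\}}$, let $X=\{l: l_{000}+l_{011}-l_{001}-l_{010}\ge0,\ l_{100}+l_{111}-l_{101}-l_{110}\ge0,\ l_{000}+l_{101}-l_{001}-l_{100}\ge0,\ l_{010}+l_{111}-l_{011}-l_{110}\ge0,\ l_{000}+l_{110}-l_{010}-l_{100}\ge0,\ l_{001}+l_{111}-l_{011}-l_{101}\ge0\}$, $Y=\{l: l_{000}+l_{011}-l_{001}-l_{010}\ge0,\ l_{100}+l_{111}-l_{101}-l_{110}\ge0,\ l_{000}+l_{101}-l_{001}-l_{100}\le0,\ l_{010}+l_{111}-l_{011}-l_{110}\le0,\ l_{000}+l_{110}-l_{010}-l_{100}\le0,\ l_{001}+l_{111}-l_{011}-l_{101}\le0\}$, $W=\{l: l_{000}+l_{011}-l_{001}-l_{010}\ge0,\ l_{100}+l_{111}-l_{101}-l_{110}\ge0\}$. Then the Minkowski sum $X+Y=\{x+y:x\in X,y\in Y\}$ equals $W$. *)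

theory Defs
  imports "HOL-Analysis.Analysis"
begin

text \<open>A point of R^8 with coordinates l_ijk, i,j,k in {0,1}, is modelled as a function
  l :: bool => bool => bool => real, where False encodes 0 and True encodes 1,
  so l_ijk = l i j k.\<close>

definition setX :: "(bool \<Rightarrow> bool \<Rightarrow> bool \<Rightarrow> real) set" where
  "setX = {l. l False False False + l False True True - l False False True - l False True False \<ge> 0
            \<and> l True False False + l True True True - l True False True - l True True False \<ge> 0
            \<and> l False False False + l True False True - l False False True - l True False False \<ge> 0
            \<and> l False True False + l True True True - l False True True - l True True False \<ge> 0
            \<and> l False False False + l True True False - l False True False - l True False False \<ge> 0
            \<and> l False False True + l True True True - l False True True - l True False True \<ge> 0}"

definition setY :: "(bool \<Rightarrow> bool \<Rightarrow> bool \<Rightarrow> real) set" where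
  "setY = {l. l False False False + l False True True - l False False True - l False True False \<ge> 0
            \<and> l True False False + l True True True - l True False True - l True True False \<ge> 0
            \<and> l False False False + l True False True - l False False True - l True False False \<le> 0
            \<and> l False True False + l True True True - l False True True - l True True False \<le> 0
            \<and> l False False False + l True True False - l False True False - l True False False \<le> 0
            \<and> l False False True + l True True True - l False True True - l True False True \<le> 0}"

definition setW :: "(bool \<Rightarrow> bool \<Rightarrow> bool \<Rightarrow> real) set" where
  "setW = {l. l False False False + l False True True - l False False True - l False True False \<ge> 0
            \<and> l True False False + l True True True - l True False True - l True True False \<ge> 0}"

end

theory Submission
  imports Defs
begin

text \<open>Both summands satisfy the two inequalities defining W, so X + Y \<subseteq> W. Conversely, the
  direction d = e_000 - e_011 is annihilated by the two forms defining W and raises each of the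
  other four forms by exactly 1. Hence for w \<in> W and K \<ge> 0 large enough to dominate those four
  forms at w, we get w = K d + (w - K d) with K d \<in> X and w - K d \<in> Y.\<close>

definition shift :: "real \<Rightarrow> bool \<Rightarrow> bool \<Rightarrow> bool \<Rightarrow> real" where
  "shift K = (\<lambda>i j k. if \<not> i \<and> \<not> j \<and> \<not> k then K else if \<not> i \<and> j \<and> k then - K else 0)"

lemma shift_in_setX: "K \<ge> 0 \<Longrightarrow> shift K \<in> setX"
  by (simp add: setX_def shift_def)

lemma diff_shift_in_setY:
  assumes "w \<in> setW"
    and "w False False False + w True False True - w False False True - w True False False \<le> K"
    and "w False True False + w True True True - w False True True - w True True False \<le> K"
    and "w False False False + w True True False - w False True False - w True False False \<le> K"
    and "w False False True + w True True True - w False True True - w True False True \<le> K"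
  shows "(\<lambda>i j k. w i j k - shift K i j k) \<in> setY"
  using assms by (simp add: setW_def setY_def shift_def)

lemma setW_decompose:
  assumes "w \<in> setW"
  shows "\<exists>x\<in>setX. \<exists>y\<in>setY. w = (\<lambda>i j k. x i j k + y i j k)"
proof -
  define K where "K = max 0 (max (w False False False + w True False True - w False False True - w True False False)
    (max (w False True False + w True True True - w False True True - w True True False)
    (max (w False False False + w True True False - w False True False - w True False False)
         (w False False True + w True True True - w False True True - w True False True))))"
  have "shift K \<in> setX"
    by (rule shift_in_setX) (simp add: K_def)
  moreover have "(\<lambda>i j k. w i j k - shift K i j k) \<in> setY"
    using assms by (intro diff_shift_in_setY) (auto simp: K_def)
  moreover have "w = (\<lambda>i j k. shift K i j k + (w i j k - shift K i j k))"
    by simp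
  ultimately show ?thesis by (intro bexI)
qed

lemma setX_plus_setY_subset_setW:
  "x \<in> setX \<Longrightarrow> y \<in> setY \<Longrightarrow> (\<lambda>i j k. x i j k + y i j k) \<in> setW"
  by (simp add: setX_def setY_def setW_def)

theorem mainTheorem2:
  shows "{(\<lambda>i j k. x i j k + y i j k) | x y. x \<in> setX \<and> y \<in> setY} = setW"
proof
  show "{(\<lambda>i j k. x i j k + y i j k) | x y. x \<in> setX \<and> y \<in> setY} \<subseteq> setW"
    using setX_plus_setY_subset_setW by blast
  show "setW \<subseteq> {(\<lambda>i j k. x i j k + y i j k) | x y. x \<in> setX \<and> y \<in> setY}"
    using setW_decompose by blast
qed

end
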